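(* Let $W\in\mathbb{C}[x_1,\dots,x_n]$ be a nondegenerate quasihomogeneous polynomial, $G$ a finite subgroup of $G_W$, and $g\in G$ with $n_g>0$. Then $W^g$ is a nondegenerate quasihomogeneous polynomial in $R^g$, and the centralizer $C_G(g)$ (acting on $V^g$ by restriction) is a finite subgroup of the symmetry group $G_{W^g}$.
   Context: $W$ is quasihomogeneous: there are positive integers $w_1,\dots,w_n,d$ with $W(\lambda^{w_1}x_1,\dots,\lambda^{w_n}x_n)=\lambda^dW$; the charge of $x_i$ is $q_i=w_i/d$. Nondegenerate means the Jacobi ring $\mathbb{C}[x]/(\partial W/\partial x_1,\dots,\partial W/\partial x_n)$ is finite dimensional. $\mathrm{GL}_n(\mathbb{C})$ acts on $V=\bigoplus\mathbb{C}x_i$ by $g\cdot x_i=\sum_j g_{ij}x_j$ and on polynomials by $(g\cdot f)(x)=f(g\cdot x_1,\dots,g\cdot x_n)$. $G_W=\{g\in\mathrm{GL}_n(\mathbb{C}): g\cdot W=W,\ g_{ij}=0\text{ if }w_i\ne w_j\}$ (the symmetry group; defined likewise for any nondegenerate quasihomogeneous polynomial). For $g\in G$, choose eigenvectors $y_1,\dots,y_n\in V$ of $g$ forming a basis, with eigenvalues $\lambda_1,\dots,\lambda_n$, such that $y_i$ has the same weight/charge as $x_i$ (possible since $g$ is block diagonal by weight). Let $W'$ be the polynomial with $W'(y_1,\dots,y_n)=W(x_1,\dots,x_n)$. Let $V^g=\ker(E_n-g)$, $n_g=\dim V^g$, $I^g=\{i:\lambda_i=1\}=\{i_1,\dots,i_{n_g}\}$,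 $R^g=\mathbb{C}[y_{i_1},\dots,y_{i_{n_g}}]$, and $W^g=W'|_{y_i=0\ (i\notin I^g)}\in R^g$. *)

theory Defs
  imports Complex_Main "HOL-Library.Poly_Mapping" "HOL-Algebra.Group"
begin

text \<open>Multivariate complex polynomials: finitely supported maps from exponent
vectors (variable index \<Rightarrow> exponent) to coefficients.\<close>

type_synonym mpoly = "(nat \<Rightarrow>\<^sub>0 nat) \<Rightarrow>\<^sub>0 complex"

definition Var :: "nat \<Rightarrow> mpoly" where
  "Var i = Poly_Mapping.single (Poly_Mapping.single i 1) 1"

definition Const :: "complex \<Rightarrow> mpoly" where
  "Const c = Poly_Mapping.single 0 c"

definition poly_in :: "nat set \<Rightarrow> mpoly \<Rightarrow> bool" where
  "poly_in S p \<longleftrightarrow> (\<forall>m \<in> Poly_Mapping.keys p. Poly_Mapping.keys m \<subseteq> S)"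

definition subst :: "(nat \<Rightarrow> mpoly) \<Rightarrow> mpoly \<Rightarrow> mpoly" where
  "subst \<sigma> p = (\<Sum>m \<in> Poly_Mapping.keys p. Const (Poly_Mapping.lookup p m) * (\<Prod>i \<in> Poly_Mapping.keys m. \<sigma> i ^ Poly_Mapping.lookup m i))"

definition pderiv_var :: "nat \<Rightarrow> mpoly \<Rightarrow> mpoly" where
  "pderiv_var i p = (\<Sum>m \<in> Poly_Mapping.keys p.
      Poly_Mapping.single (m - Poly_Mapping.single i 1) (Poly_Mapping.lookup p m * of_nat (Poly_Mapping.lookup m i)))"

definition quasihomogeneous :: "nat set \<Rightarrow> (nat \<Rightarrow> nat) \<Rightarrow> nat \<Rightarrow> mpoly \<Rightarrow> bool" where
  "quasihomogeneous S w d W \<longleftrightarrow>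
     poly_in S W \<and> (\<forall>i \<in> S. w i > 0) \<and> d > 0 \<and>
     (\<forall>t::complex. subst (\<lambda>i. if i \<in> S then Const (t ^ w i) * Var i else Var i) W
                    = Const (t ^ d) * W)"

definition jacobian_ideal :: "nat set \<Rightarrow> mpoly \<Rightarrow> mpoly set" where
  "jacobian_ideal S W =
     {\<Sum>i \<in> S. a i * pderiv_var i W | a. \<forall>i \<in> S. poly_in S (a i)}"

text \<open>Nondegenerate: the Jacobi ring C[x_i : i in S]/(\<partial>W/\<partial>x_i) is a finite dimensional
complex vector space, i.e. spanned by the classes of finitely many polynomials.\<close>
definition nondegenerate :: "nat set \<Rightarrow> mpoly \<Rightarrow> bool" where
  "nondegenerate S W \<longleftrightarrow>
     (\<exists>B. finite B \<and> B \<subseteq> {p. poly_in S p} \<and>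
        (\<forall>p. poly_in S p \<longrightarrow>
           (\<exists>c. p - (\<Sum>b \<in> B. Const (c b) * b) \<in> jacobian_ideal S W)))"

text \<open>Square complex matrices indexed by S \<times> S (entries outside S \<times> S are zero).\<close>
type_synonym cmat = "nat \<Rightarrow> nat \<Rightarrow> complex"

definition mmul :: "nat set \<Rightarrow> cmat \<Rightarrow> cmat \<Rightarrow> cmat" where
  "mmul S A B = (\<lambda>i k. if i \<in> S \<and> k \<in> S then \<Sum>j \<in> S. A i j * B j k else 0)"

definition idm :: "nat set \<Rightarrow> cmat" where
  "idm S = (\<lambda>i j. if i \<in> S \<and> i = j then 1 else 0)"

definition supported :: "nat set \<Rightarrow> cmat \<Rightarrow> bool" where
  "supported S A \<longleftrightarrow> (\<forall>i j. (i \<notin> S \<or> j \<notin> S) \<longrightarrow> A i j = 0)"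

definition GLset :: "nat set \<Rightarrow> cmat set" where
  "GLset S = {A. supported S A \<and>
     (\<exists>B. supported S B \<and> mmul S A B = idm S \<and> mmul S B A = idm S)}"

definition act :: "nat set \<Rightarrow> cmat \<Rightarrow> mpoly \<Rightarrow> mpoly" where
  "act S g f = subst (\<lambda>i. if i \<in> S then (\<Sum>j \<in> S. Const (g i j) * Var j) else Var i) f"

definition GL_group :: "nat set \<Rightarrow> cmat monoid" where
  "GL_group S = \<lparr>carrier = GLset S, mult = mmul S, one = idm S\<rparr>"

definition sym_set :: "nat set \<Rightarrow> (nat \<Rightarrow> nat) \<Rightarrow> mpoly \<Rightarrow> cmat set" where
  "sym_set S w W = {g \<in> GLset S. act S g W = W \<and>
      (\<forall>i \<in> S. \<forall>j \<in> S. w i \<noteq> w j \<longrightarrow> g i j = 0)}"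

definition sym_group :: "nat set \<Rightarrow> (nat \<Rightarrow> nat) \<Rightarrow> mpoly \<Rightarrow> cmat monoid" where
  "sym_group S w W = \<lparr>carrier = sym_set S w W, mult = mmul S, one = idm S\<rparr>"

end

theory Submission
  imports Defs
begin

(*
  In an eigenbasis y = P x of g, with x = Q y and weights preserved by P, the polynomial
  W' = W(Q y) is invariant under y_i \<mapsto> \<lambda>_i y_i.  Differentiating, \<partial>W'/\<partial>y_k is multiplied by
  \<lambda>_k under this scaling, so it vanishes on the fixed locus V^g = {y_i = 0 for \<lambda>_i \<noteq> 1} unless
  \<lambda>_k = 1, where it restricts to \<partial>W^g/\<partial>y_k.  Hence restriction f \<mapsto> (Q f)|V^g is a surjective
  ring map C[x] \<rightarrow> R^g carrying the Jacobian ideal of W into that of W^g, and the Jacobi ring of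
  W^g, being a quotient of that of W, is finite dimensional.  Quasihomogeneity survives because Q
  commutes with the weight scaling.  An element h of the centralizer commutes with diag(\<lambda>), so
  P h Q preserves V^g and its complement, and its V^g-block gives a homomorphism
  C_G(g) \<rightarrow> G_{W^g}.
*)

abbreviation lookup :: "('a \<Rightarrow>\<^sub>0 'b::zero) \<Rightarrow> 'a \<Rightarrow> 'b" where
  "lookup \<equiv> Poly_Mapping.lookup"
abbreviation keys :: "('a \<Rightarrow>\<^sub>0 'b::zero) \<Rightarrow> 'a set" where
  "keys \<equiv> Poly_Mapping.keys"
abbreviation single :: "'a \<Rightarrow> 'b \<Rightarrow> ('a \<Rightarrow>\<^sub>0 'b::zero)" where
  "single \<equiv> Poly_Mapping.single"

section \<open>Substitution and partial derivatives\<close>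

lemma Const_0 [simp]: "Const 0 = 0"
  by (simp add: Const_def)

lemma Const_1 [simp]: "Const 1 = 1"
  by (simp add: Const_def)

lemma Const_add: "Const (a + b) = Const a + Const b"
  by (simp add: Const_def single_add)

lemma Const_mult: "Const (a * b) = Const a * Const b"
  by (simp add: Const_def mult_single)

lemma Const_diff: "Const (a - b) = Const a - Const b"
  by (simp add: Const_def single_diff)

lemma Const_sum: "Const (sum f A) = (\<Sum>x\<in>A. Const (f x))"
  by (induction A rule: infinite_finite_induct) (auto simp: Const_add)

lemma Const_mult_single: "Const c * single m a = single m (c * a)"
  by (simp add: Const_def mult_single)

lemma Const_eq_0_iff [simp]: "Const c = 0 \<longleftrightarrow> c = 0"
  by (metis Const_def lookup_single_eq lookup_zero single_zero)

lemma poly_mapping_eq_sum_single: "(p :: 'a \<Rightarrow>\<^sub>0 'b::comm_monoid_add) = (\<Sum>m\<in>keys p. single m (lookup p m))"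
proof (rule poly_mapping_eqI)
  fix k
  have "lookup (\<Sum>m\<in>keys p. single m (lookup p m)) k = (\<Sum>m\<in>keys p. if m = k then lookup p m else 0)"
    by (simp add: lookup_sum lookup_single when_def)
  also have "\<dots> = lookup p k"
    by (simp add: in_keys_iff)
  finally show "lookup p k = lookup (\<Sum>m\<in>keys p. single m (lookup p m)) k"
    by simp
qed

lemma mult_eq_sum_single:
  "p * q = (\<Sum>m1\<in>keys p. \<Sum>m2\<in>keys q. single (m1 + m2) (lookup p m1 * lookup q m2))"
proof -
  have "p * q = (\<Sum>m1\<in>keys p. single m1 (lookup p m1)) * (\<Sum>m2\<in>keys q. single m2 (lookup q m2))"
    by (metis poly_mapping_eq_sum_single)
  then show ?thesis
    by (simp add: sum_product mult_single)
qed

definition mpoly_extend :: "((nat \<Rightarrow>\<^sub>0 nat) \<Rightarrow> mpoly) \<Rightarrow> mpoly \<Rightarrow> mpoly" where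
  "mpoly_extend f p = (\<Sum>m\<in>keys p. Const (lookup p m) * f m)"

lemma mpoly_extend_eq_sum:
  "finite K \<Longrightarrow> keys p \<subseteq> K \<Longrightarrow> mpoly_extend f p = (\<Sum>m\<in>K. Const (lookup p m) * f m)"
  unfolding mpoly_extend_def by (rule sum.mono_neutral_left) (auto simp: in_keys_iff)

lemma mpoly_extend_0 [simp]: "mpoly_extend f 0 = 0"
  by (simp add: mpoly_extend_def)

lemma mpoly_extend_single [simp]: "mpoly_extend f (single m c) = Const c * f m"
  by (cases "c = 0") (auto simp: mpoly_extend_def)

lemma mpoly_extend_add: "mpoly_extend f (p + q) = mpoly_extend f p + mpoly_extend f q"
proof -
  let ?K = "keys p \<union> keys q"
  have "mpoly_extend f (p + q) = (\<Sum>m\<in>?K. Const (lookup (p + q) m) * f m)"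
    by (rule mpoly_extend_eq_sum) (auto dest: subsetD[OF keys_add])
  also have "\<dots> = (\<Sum>m\<in>?K. Const (lookup p m) * f m) + (\<Sum>m\<in>?K. Const (lookup q m) * f m)"
    by (simp add: lookup_add Const_add distrib_right sum.distrib)
  also have "\<dots> = mpoly_extend f p + mpoly_extend f q"
    by (simp add: mpoly_extend_eq_sum[symmetric])
  finally show ?thesis .
qed

lemma mpoly_extend_sum: "mpoly_extend f (sum g A) = (\<Sum>x\<in>A. mpoly_extend f (g x))"
  by (induction A rule: infinite_finite_induct) (auto simp: mpoly_extend_add)

lemma mpoly_extend_mult_expand:
  "mpoly_extend f (p * q) = (\<Sum>m1\<in>keys p. \<Sum>m2\<in>keys q. Const (lookup p m1 * lookup q m2) * f (m1 + m2))"
  by (simp add: mult_eq_sum_single mpoly_extend_sum)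

lemma mpoly_extend_mult:
  assumes "\<And>m1 m2. f (m1 + m2) = f m1 * f m2"
  shows "mpoly_extend f (p * q) = mpoly_extend f p * mpoly_extend f q"
proof -
  have "mpoly_extend f (p * q)
      = (\<Sum>m1\<in>keys p. \<Sum>m2\<in>keys q. (Const (lookup p m1) * f m1) * (Const (lookup q m2) * f m2))"
    by (simp add: mpoly_extend_mult_expand assms Const_mult ac_simps)
  then show ?thesis
    by (simp add: mpoly_extend_def sum_product)
qed

lemma mpoly_extend_derivation:
  assumes "\<And>m1 m2. f (m1 + m2) = f m1 * single m2 1 + single m1 1 * f m2"
  shows "mpoly_extend f (p * q) = mpoly_extend f p * q + p * mpoly_extend f q"
proof -
  have split: "Const (lookup p m1 * lookup q m2) * f (m1 + m2)
      = (Const (lookup p m1) * f m1) * single m2 (lookup q m2)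
        + single m1 (lookup p m1) * (Const (lookup q m2) * f m2)" for m1 m2
  proof -
    have "single m1 (lookup p m1) = Const (lookup p m1) * single m1 1"
      and "single m2 (lookup q m2) = Const (lookup q m2) * single m2 1"
      by (simp_all add: Const_mult_single)
    then show ?thesis
      unfolding assms Const_mult by (simp add: algebra_simps)
  qed
  have "mpoly_extend f (p * q)
      = (\<Sum>m1\<in>keys p. \<Sum>m2\<in>keys q. (Const (lookup p m1) * f m1) * single m2 (lookup q m2))
        + (\<Sum>m1\<in>keys p. \<Sum>m2\<in>keys q. single m1 (lookup p m1) * (Const (lookup q m2) * f m2))"
    by (simp add: mpoly_extend_mult_expand split sum.distrib)
  also have "\<dots> = mpoly_extend f p * q + p * mpoly_extend f q"
    by (subst (3 4) poly_mapping_eq_sum_single) (simp add: mpoly_extend_def sum_product)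
  finally show ?thesis .
qed

definition subst_monomial :: "(nat \<Rightarrow> mpoly) \<Rightarrow> (nat \<Rightarrow>\<^sub>0 nat) \<Rightarrow> mpoly" where
  "subst_monomial \<sigma> m = (\<Prod>i\<in>keys m. \<sigma> i ^ lookup m i)"

lemma subst_eq_mpoly_extend: "subst \<sigma> = mpoly_extend (subst_monomial \<sigma>)"
  by (simp add: fun_eq_iff subst_def mpoly_extend_def subst_monomial_def)

lemma subst_monomial_add: "subst_monomial \<sigma> (m1 + m2) = subst_monomial \<sigma> m1 * subst_monomial \<sigma> m2"
proof -
  have expand: "subst_monomial \<sigma> m = (\<Prod>i\<in>keys m1 \<union> keys m2. \<sigma> i ^ lookup m i)"
    if "keys m \<subseteq> keys m1 \<union> keys m2" for m
    unfolding subst_monomial_def using that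
    by (intro prod.mono_neutral_left) (auto simp: in_keys_iff)
  show ?thesis
    by (subst (1 2 3) expand) (auto simp: lookup_add power_add prod.distrib dest: subsetD[OF keys_add])
qed

lemma subst_add [simp]: "subst \<sigma> (p + q) = subst \<sigma> p + subst \<sigma> q"
  by (simp add: subst_eq_mpoly_extend mpoly_extend_add)

lemma subst_mult [simp]: "subst \<sigma> (p * q) = subst \<sigma> p * subst \<sigma> q"
  by (simp add: subst_eq_mpoly_extend mpoly_extend_mult subst_monomial_add)

lemma subst_0 [simp]: "subst \<sigma> 0 = 0"
  by (simp add: subst_eq_mpoly_extend)

lemma subst_Const [simp]: "subst \<sigma> (Const c) = Const c"
  by (simp add: subst_eq_mpoly_extend Const_def subst_monomial_def)

lemma subst_1 [simp]: "subst \<sigma> 1 = 1"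
  using subst_Const[of \<sigma> 1] by simp

lemma subst_Var [simp]: "subst \<sigma> (Var i) = \<sigma> i"
  by (simp add: subst_eq_mpoly_extend Var_def subst_monomial_def)

lemma subst_sum: "subst \<sigma> (sum f A) = (\<Sum>x\<in>A. subst \<sigma> (f x))"
  by (induction A rule: infinite_finite_induct) auto

lemma subst_uminus [simp]: "subst \<sigma> (- p) = - subst \<sigma> p"
  by (metis add_eq_0_iff2 add.right_inverse subst_add subst_0)

lemma subst_diff [simp]: "subst \<sigma> (p - q) = subst \<sigma> p - subst \<sigma> q"
  by (metis diff_conv_add_uminus subst_add subst_uminus)

lemma Var_power: "Var i ^ k = single (single i k) 1"
  by (induction k) (simp_all add: Var_def mult_single single_add[symmetric])

lemma prod_single_1:
  "finite K \<Longrightarrow> (\<Prod>i\<in>K. single (f i) (1::'a::comm_semiring_1)) = single (\<Sum>i\<in>K. f i) 1"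
  by (induction K rule: finite_induct) (auto simp: mult_single)

lemma subst_Var_id [simp]: "subst Var p = p"
proof -
  have "subst_monomial Var m = single m 1" for m
    unfolding subst_monomial_def Var_power
    by (subst prod_single_1) (simp_all flip: poly_mapping_eq_sum_single)
  then show ?thesis
    by (subst (2) poly_mapping_eq_sum_single) (simp add: subst_eq_mpoly_extend mpoly_extend_def Const_mult_single)
qed

lemma poly_in_Const [simp]: "poly_in V (Const c)"
  by (simp add: poly_in_def Const_def)

lemma poly_in_Var [simp]: "i \<in> V \<Longrightarrow> poly_in V (Var i)"
  by (simp add: poly_in_def Var_def)

lemma poly_in_0 [simp]: "poly_in V 0"
  by (simp add: poly_in_def)

lemma poly_in_UNIV [simp]: "poly_in UNIV p"
  by (simp add: poly_in_def)

lemma poly_in_add [simp]: "poly_in V p \<Longrightarrow> poly_in V q \<Longrightarrow> poly_in V (p + q)"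
  unfolding poly_in_def by (meson Un_iff keys_add subsetD)

lemma poly_in_mult [simp]: "poly_in V p \<Longrightarrow> poly_in V q \<Longrightarrow> poly_in V (p * q)"
  unfolding poly_in_def by (fastforce dest!: subsetD[OF keys_mult] dest: subsetD[OF keys_add])

lemma poly_in_sum [simp]: "(\<And>x. x \<in> A \<Longrightarrow> poly_in V (f x)) \<Longrightarrow> poly_in V (sum f A)"
  by (induction A rule: infinite_finite_induct) auto

lemma poly_in_subset: "poly_in V p \<Longrightarrow> V \<subseteq> U \<Longrightarrow> poly_in U p"
  by (auto simp: poly_in_def)

lemma subst_Var_expansion:
  "p = (\<Sum>m\<in>keys p. Const (lookup p m) * (\<Prod>i\<in>keys m. Var i ^ lookup m i))"
  by (metis subst_Var_id subst_def)

lemma mpoly_induct [consumes 1, case_names Const Var add mult]: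
  assumes "poly_in V p"
    and Const: "\<And>c. P (Const c)" and Var: "\<And>j. j \<in> V \<Longrightarrow> P (Var j)"
    and add: "\<And>p q. P p \<Longrightarrow> P q \<Longrightarrow> P (p + q)"
    and mult: "\<And>p q. P p \<Longrightarrow> P q \<Longrightarrow> P (p * q)"
  shows "P p"
proof -
  have sum: "P (sum f K)" if "\<And>x. x \<in> K \<Longrightarrow> P (f x)" for f and K :: "'z set"
    using that by (induction K rule: infinite_finite_induct) (auto intro: add simp: Const[of 0, simplified])
  have prod: "P (prod f K)" if "\<And>x. x \<in> K \<Longrightarrow> P (f x)" for f and K :: "'z set"
    using that by (induction K rule: infinite_finite_induct) (auto intro: mult simp: Const[of 1, simplified])
  have power: "P (q ^ k)" if "P q" for q k
    using that by (induction k) (auto intro: mult simp: Const[of 1, simplified])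
  have "P (\<Sum>m\<in>keys p. Const (lookup p m) * (\<Prod>i\<in>keys m. Var i ^ lookup m i))"
    using assms(1) unfolding poly_in_def by (blast intro: sum mult Const prod power Var)
  then show ?thesis
    by (subst subst_Var_expansion)
qed

lemma subst_cong:
  "poly_in V p \<Longrightarrow> (\<And>i. i \<in> V \<Longrightarrow> \<sigma> i = \<tau> i) \<Longrightarrow> subst \<sigma> p = subst \<tau> p"
  by (induction rule: mpoly_induct) auto

lemma subst_subst: "subst \<tau> (subst \<sigma> p) = subst (\<lambda>i. subst \<tau> (\<sigma> i)) p"
  using poly_in_UNIV[of p] by (induction rule: mpoly_induct) auto

lemma poly_in_subst:
  "poly_in U p \<Longrightarrow> (\<And>i. i \<in> U \<Longrightarrow> poly_in V (\<sigma> i)) \<Longrightarrow> poly_in V (subst \<sigma> p)"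
  by (induction rule: mpoly_induct) auto

definition pderiv_monomial :: "nat \<Rightarrow> (nat \<Rightarrow>\<^sub>0 nat) \<Rightarrow> mpoly" where
  "pderiv_monomial i m = single (m - single i 1) (of_nat (lookup m i))"

lemma pderiv_var_eq_mpoly_extend: "pderiv_var i = mpoly_extend (pderiv_monomial i)"
  by (simp add: fun_eq_iff pderiv_var_def mpoly_extend_def pderiv_monomial_def Const_mult_single)

lemma pderiv_monomial_add:
  "pderiv_monomial i (m1 + m2) = pderiv_monomial i m1 * single m2 1 + single m1 1 * pderiv_monomial i m2"
proof -
  have lookup_minus: "lookup (m - n) k = lookup m k - lookup n k" for m n :: "nat \<Rightarrow>\<^sub>0 nat" and k
    by (simp add: minus_poly_mapping.rep_eq)
  have shift1: "m1 - single i 1 + m2 = m1 + m2 - single i 1" if "lookup m1 i > 0"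
    using that by (intro poly_mapping_eqI) (auto simp: lookup_minus lookup_add lookup_single when_def)
  have shift2: "m1 + (m2 - single i 1) = m1 + m2 - single i 1" if "lookup m2 i > 0"
    using that by (intro poly_mapping_eqI) (auto simp: lookup_minus lookup_add lookup_single when_def)
  show ?thesis
    unfolding pderiv_monomial_def mult_single
    by (cases "lookup m1 i = 0"; cases "lookup m2 i = 0")
       (simp_all add: shift1[simplified] shift2[simplified] lookup_add single_add[symmetric])
qed

lemma pderiv_var_add [simp]: "pderiv_var i (p + q) = pderiv_var i p + pderiv_var i q"
  by (simp add: pderiv_var_eq_mpoly_extend mpoly_extend_add)

lemma pderiv_var_mult [simp]: "pderiv_var i (p * q) = pderiv_var i p * q + p * pderiv_var i q"
  by (simp add: pderiv_var_eq_mpoly_extend mpoly_extend_derivation pderiv_monomial_add)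

lemma pderiv_var_0 [simp]: "pderiv_var i 0 = 0"
  by (simp add: pderiv_var_eq_mpoly_extend)

lemma pderiv_var_Const [simp]: "pderiv_var i (Const c) = 0"
  by (simp add: pderiv_var_eq_mpoly_extend Const_def pderiv_monomial_def)

lemma pderiv_var_Var: "pderiv_var i (Var j) = (if i = j then 1 else 0)"
  by (simp add: pderiv_var_eq_mpoly_extend Var_def pderiv_monomial_def lookup_single)

lemma pderiv_var_sum: "pderiv_var i (sum f A) = (\<Sum>x\<in>A. pderiv_var i (f x))"
  by (induction A rule: infinite_finite_induct) auto

lemma pderiv_var_linear_form:
  "finite S \<Longrightarrow> k \<in> S \<Longrightarrow> pderiv_var k (\<Sum>j\<in>S. Const (a j) * Var j) = Const (a k)"
  by (simp add: pderiv_var_sum pderiv_var_Var if_distrib cong: if_cong)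

lemma chain_rule:
  assumes "finite V" "poly_in V p"
  shows "pderiv_var k (subst \<sigma> p) = (\<Sum>j\<in>V. pderiv_var k (\<sigma> j) * subst \<sigma> (pderiv_var j p))"
  using assms(2)
proof (induction rule: mpoly_induct)
  case (Var j)
  then show ?case
    using assms(1) by (simp add: pderiv_var_Var if_distrib[of "subst \<sigma>"] if_distrib[of "times _"] cong: if_cong)
next
  case (add p q)
  then show ?case
    by (simp add: distrib_left sum.distrib)
next
  case (mult p q)
  then show ?case
    by (simp add: distrib_left distrib_right sum.distrib sum_distrib_left sum_distrib_right ac_simps)
qed simp

section \<open>Matrices and their action on polynomials\<close>

lemma mmul_assoc: "finite S \<Longrightarrow> mmul S (mmul S A B) C = mmul S A (mmul S B C)"
proof (intro ext)
  fix i k assume "finite S"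
  have "(\<Sum>j\<in>S. (\<Sum>l\<in>S. A i l * B l j) * C j k) = (\<Sum>j\<in>S. \<Sum>l\<in>S. A i l * B l j * C j k)"
    by (simp add: sum_distrib_right)
  also have "\<dots> = (\<Sum>l\<in>S. \<Sum>j\<in>S. A i l * B l j * C j k)"
    by (rule sum.swap)
  also have "\<dots> = (\<Sum>l\<in>S. A i l * (\<Sum>j\<in>S. B l j * C j k))"
    by (simp add: sum_distrib_left mult.assoc)
  finally show "mmul S (mmul S A B) C i k = mmul S A (mmul S B C) i k"
    by (auto simp: mmul_def intro: sum.cong)
qed

lemma supported_mmul [simp]: "supported S (mmul S A B)"
  by (simp add: supported_def mmul_def)

lemma supported_idm [simp]: "supported S (idm S)"
  by (simp add: supported_def idm_def)

lemma mmul_idm_left: "finite S \<Longrightarrow> supported S A \<Longrightarrow> mmul S (idm S) A = A"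
  unfolding mmul_def idm_def supported_def
  by (intro ext) (auto simp: if_distrib[of "\<lambda>x. x * _"] cong: if_cong)

lemma mmul_idm_right: "finite S \<Longrightarrow> supported S A \<Longrightarrow> mmul S A (idm S) = A"
  unfolding mmul_def idm_def supported_def
  by (intro ext) (auto simp: if_distrib[of "times _"] cong: if_cong)

lemma mmul_inverse_commute:
  assumes S: "finite S" and "supported S A" "supported S B" "supported S D"
    and AB: "mmul S A B = idm S" and BA: "mmul S B A = idm S"
    and AD: "mmul S A D = mmul S D A"
  shows "mmul S B D = mmul S D B"
proof -
  have "mmul S B D = mmul S (mmul S B D) (mmul S A B)"
    using assms by (simp add: mmul_idm_right)
  also have "\<dots> = mmul S B (mmul S (mmul S A D) B)"
    using S AD by (simp add: mmul_assoc)
  also have "\<dots> = mmul S (mmul S B A) (mmul S D B)"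
    using S by (simp add: mmul_assoc)
  also have "\<dots> = mmul S D B"
    using S BA by (simp add: mmul_idm_left)
  finally show ?thesis .
qed

definition diagm :: "nat set \<Rightarrow> (nat \<Rightarrow> complex) \<Rightarrow> cmat" where
  "diagm S f = (\<lambda>i j. if i \<in> S \<and> i = j then f i else 0)"

lemma supported_diagm [simp]: "supported S (diagm S f)"
  by (simp add: supported_def diagm_def)

lemma mmul_diagm_right: "finite S \<Longrightarrow> i \<in> S \<Longrightarrow> k \<in> S \<Longrightarrow> mmul S A (diagm S f) i k = A i k * f k"
  unfolding mmul_def diagm_def by (simp add: if_distrib[of "times _"] cong: if_cong)

lemma mmul_diagm_left: "finite S \<Longrightarrow> i \<in> S \<Longrightarrow> k \<in> S \<Longrightarrow> mmul S (diagm S f) A i k = f i * A i k"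
  unfolding mmul_def diagm_def by (simp add: if_distrib[of "\<lambda>x. x * _"] cong: if_cong)

text \<open>\<open>A\<close> preserves the span of the \<open>x\<^sub>i\<close> on which \<open>f\<close> takes any given value.\<close>

definition block_diag :: "nat set \<Rightarrow> (nat \<Rightarrow> 'a) \<Rightarrow> cmat \<Rightarrow> bool" where
  "block_diag S f A \<longleftrightarrow> (\<forall>i\<in>S. \<forall>j\<in>S. f i \<noteq> f j \<longrightarrow> A i j = 0)"

lemma block_diag_comp: "block_diag S f A \<Longrightarrow> block_diag S (\<lambda>i. h (f i)) A"
  unfolding block_diag_def by (metis (no_types))

lemma block_diag_comp_inj: "inj h \<Longrightarrow> block_diag S (\<lambda>i. h (f i)) A \<longleftrightarrow> block_diag S f A"
  by (auto simp: block_diag_def inj_eq)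

lemma block_diag_idm [simp]: "block_diag S f (idm S)"
  by (simp add: block_diag_def idm_def)

lemma block_diag_mmul:
  assumes "block_diag S f A" "block_diag S f B"
  shows "block_diag S f (mmul S A B)"
  unfolding block_diag_def
proof (intro ballI impI)
  fix i k assume "i \<in> S" "k \<in> S" "f i \<noteq> f k"
  then have "A i j * B j k = 0" if "j \<in> S" for j
    using assms that by (cases "f i = f j") (auto simp: block_diag_def)
  then show "mmul S A B i k = 0"
    by (simp add: mmul_def sum.neutral)
qed

lemma block_diag_iff_commute:
  assumes "finite S" "supported S A"
  shows "block_diag S f A \<longleftrightarrow> mmul S A (diagm S f) = mmul S (diagm S f) A"
proof
  assume "block_diag S f A"
  then show "mmul S A (diagm S f) = mmul S (diagm S f) A"
    using assms
    by (intro ext, rename_tac i k, case_tac "i \<in> S \<and> k \<in> S")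
       (auto simp: mmul_diagm_right mmul_diagm_left block_diag_def, auto simp: mmul_def)
next
  assume commute: "mmul S A (diagm S f) = mmul S (diagm S f) A"
  show "block_diag S f A"
    unfolding block_diag_def
  proof (intro ballI impI)
    fix i j assume ij: "i \<in> S" "j \<in> S" "f i \<noteq> f j"
    have "A i j * f j = f i * A i j"
      using fun_cong[OF fun_cong[OF commute, of i], of j] ij assms
      by (simp add: mmul_diagm_right mmul_diagm_left)
    then have "A i j * (f j - f i) = 0"
      by (simp add: algebra_simps)
    then show "A i j = 0"
      using ij by simp
  qed
qed

lemma block_diag_inverse:
  fixes f :: "nat \<Rightarrow> complex"
  assumes "finite S" "supported S A" "supported S B"
    and "mmul S A B = idm S" "mmul S B A = idm S" "block_diag S f A"
  shows "block_diag S f B"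
  using assms mmul_inverse_commute[OF assms(1-3) supported_diagm assms(4,5)] block_diag_iff_commute
  by blast

lemma block_diag_inverse_nat:
  fixes w :: "nat \<Rightarrow> nat"
  assumes "finite S" "supported S A" "supported S B"
    and "mmul S A B = idm S" "mmul S B A = idm S" "block_diag S w A"
  shows "block_diag S w B"
  using assms block_diag_inverse[of S A B "\<lambda>i. of_nat (w i)"]
  by (simp add: block_diag_comp_inj[OF inj_of_nat])

definition act_var :: "nat set \<Rightarrow> cmat \<Rightarrow> nat \<Rightarrow> mpoly" where
  "act_var S g i = (if i \<in> S then (\<Sum>j\<in>S. Const (g i j) * Var j) else Var i)"

lemma act_eq_subst: "act S g = subst (act_var S g)"
  unfolding act_def act_var_def ..

lemma act_act: "finite S \<Longrightarrow> act S A (act S B f) = act S (mmul S B A) f"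
  unfolding act_eq_subst subst_subst
proof (intro arg_cong2[where f=subst] refl ext)
  fix i assume S: "finite S"
  show "subst (act_var S A) (act_var S B i) = act_var S (mmul S B A) i"
  proof (cases "i \<in> S")
    case True
    have "subst (act_var S A) (act_var S B i) = (\<Sum>j\<in>S. \<Sum>k\<in>S. Const (B i j * A j k) * Var k)"
      using True by (simp add: act_var_def subst_sum sum_distrib_left Const_mult mult.assoc)
    also have "\<dots> = (\<Sum>k\<in>S. Const (\<Sum>j\<in>S. B i j * A j k) * Var k)"
      by (subst sum.swap) (simp add: Const_sum sum_distrib_right)
    also have "\<dots> = act_var S (mmul S B A) i"
      using True by (simp add: act_var_def mmul_def)
    finally show ?thesis .
  qed (simp add: act_var_def)
qed

lemma act_idm [simp]: "finite S \<Longrightarrow> act S (idm S) f = f"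
proof -
  assume "finite S"
  then have "act_var S (idm S) = Var"
    by (intro ext) (simp add: act_var_def idm_def if_distrib[of Const] if_distrib[of "\<lambda>x. x * _"] cong: if_cong)
  then show ?thesis
    by (simp add: act_eq_subst)
qed

lemma act_diagm:
  "finite S \<Longrightarrow> act S (diagm S f) = subst (\<lambda>i. if i \<in> S then Const (f i) * Var i else Var i)"
  unfolding act_eq_subst
  by (intro arg_cong[where f=subst] ext)
     (simp add: act_var_def diagm_def if_distrib[of Const] if_distrib[of "\<lambda>x. x * _"] cong: if_cong)

lemma poly_in_act: "poly_in S f \<Longrightarrow> poly_in S (act S g f)"
  unfolding act_eq_subst by (rule poly_in_subst) (auto simp: act_var_def)

lemma pderiv_act:
  assumes "finite S" "poly_in S p" "k \<in> S"
  shows "pderiv_var k (act S A p) = (\<Sum>j\<in>S. Const (A j k) * act S A (pderiv_var j p))"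
  unfolding act_eq_subst using assms
  by (subst chain_rule[OF assms(1,2)]) (simp add: act_var_def pderiv_var_linear_form)

lemma pderiv_act_diagm:
  assumes "finite S" "poly_in S p" "k \<in> S"
  shows "pderiv_var k (act S (diagm S f) p) = Const (f k) * act S (diagm S f) (pderiv_var k p)"
  using assms by (simp add: pderiv_act diagm_def if_distrib[of Const] if_distrib[of "\<lambda>x. x * _"] cong: if_cong)

lemma act_pderiv:
  assumes S: "finite S" "poly_in S p" "i \<in> S" and AB: "mmul S A B = idm S"
  shows "act S A (pderiv_var i p) = (\<Sum>k\<in>S. Const (B k i) * pderiv_var k (act S A p))"
proof -
  let ?X = "\<lambda>j. act S A (pderiv_var j p)"
  have "(\<Sum>k\<in>S. Const (B k i) * pderiv_var k (act S A p)) = (\<Sum>k\<in>S. \<Sum>j\<in>S. Const (A j k * B k i) * ?X j)"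
    using S by (simp add: pderiv_act sum_distrib_left Const_mult ac_simps)
  also have "\<dots> = (\<Sum>j\<in>S. Const (mmul S A B j i) * ?X j)"
    using S by (subst sum.swap) (simp add: mmul_def Const_sum sum_distrib_right)
  also have "\<dots> = ?X i"
    using S by (simp add: AB idm_def if_distrib[of Const] if_distrib[of "\<lambda>x. x * _"] cong: if_cong)
  finally show ?thesis ..
qed

section \<open>Symmetry groups\<close>

lemma sym_set_iff:
  "A \<in> sym_set S w W \<longleftrightarrow> A \<in> GLset S \<and> act S A W = W \<and> block_diag S w A"
  by (simp add: sym_set_def block_diag_def)

lemma GLset_iff:
  "A \<in> GLset S \<longleftrightarrow> supported S A \<and> (\<exists>B. supported S B \<and> mmul S A B = idm S \<and> mmul S B A = idm S)"
  by (simp add: GLset_def)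

lemma sym_set_supported: "A \<in> sym_set S w W \<Longrightarrow> supported S A"
  by (simp add: sym_set_iff GLset_iff)

lemma sym_set_mmul:
  assumes S: "finite S" and A: "A \<in> sym_set S w W" and B: "B \<in> sym_set S w W"
  shows "mmul S A B \<in> sym_set S w W"
proof -
  obtain A' where A': "supported S A'" "mmul S A A' = idm S" "mmul S A' A = idm S"
    using A by (auto simp: sym_set_iff GLset_iff)
  obtain B' where B': "supported S B'" "mmul S B B' = idm S" "mmul S B' B = idm S"
    using B by (auto simp: sym_set_iff GLset_iff)
  have "supported S A" "supported S B"
    using A B by (auto simp: sym_set_iff GLset_iff)
  have "mmul S (mmul S A B) (mmul S B' A') = mmul S A (mmul S (mmul S B B') A')"
    using S by (simp add: mmul_assoc)
  then have AB_inv: "mmul S (mmul S A B) (mmul S B' A') = idm S"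
    using S A' B' by (simp add: mmul_idm_left)
  have "mmul S (mmul S B' A') (mmul S A B) = mmul S B' (mmul S (mmul S A' A) B)"
    using S by (simp add: mmul_assoc)
  then have "mmul S (mmul S B' A') (mmul S A B) = idm S"
    using S A' B' \<open>supported S B\<close> by (simp add: mmul_idm_left)
  note AB_inv this
  moreover have "act S (mmul S A B) W = W"
    using S A B by (simp add: sym_set_iff flip: act_act)
  ultimately show ?thesis
    using A B A' B' by (auto simp: sym_set_iff GLset_iff intro: block_diag_mmul intro!: exI[of _ "mmul S B' A'"])
qed

lemma sym_set_inverse:
  assumes S: "finite S" and A: "A \<in> sym_set S w W"
    and B: "supported S B" "mmul S A B = idm S" "mmul S B A = idm S"
  shows "B \<in> sym_set S w W"
proof -
  have "supported S A" "act S A W = W" "block_diag S w A"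
    using A by (auto simp: sym_set_iff GLset_iff)
  moreover from this have "act S B W = W"
    using S B act_act[OF S, of B A W] by simp
  ultimately show ?thesis
    using S B block_diag_inverse_nat[OF S] by (auto simp: sym_set_iff GLset_iff)
qed

lemma idm_in_sym_set: "finite S \<Longrightarrow> idm S \<in> sym_set S w W"
  by (auto simp: sym_set_iff GLset_iff mmul_idm_left intro!: exI[of _ "idm S"])

lemma group_sym_group: "finite S \<Longrightarrow> group (sym_group S w W)"
proof (rule groupI)
  fix A assume S: "finite S" and A: "A \<in> carrier (sym_group S w W)"
  then obtain B where B: "supported S B" "mmul S A B = idm S" "mmul S B A = idm S"
    by (auto simp: sym_group_def sym_set_iff GLset_iff)
  with S A show "\<exists>B\<in>carrier (sym_group S w W). B \<otimes>\<^bsub>sym_group S w W\<^esub> A = \<one>\<^bsub>sym_group S w W\<^esub>"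
    by (auto simp: sym_group_def intro: sym_set_inverse)
qed (auto simp: sym_group_def sym_set_mmul mmul_assoc mmul_idm_left idm_in_sym_set sym_set_supported)

lemma (in group) subgroup_centralizer:
  assumes H: "subgroup H G" and g: "g \<in> carrier G"
  shows "subgroup {h \<in> H. h \<otimes> g = g \<otimes> h} G"
proof (rule subgroupI)
  fix h assume "h \<in> {h \<in> H. h \<otimes> g = g \<otimes> h}"
  then have h: "h \<in> H" "h \<in> carrier G" and hg: "h \<otimes> g = g \<otimes> h"
    using subgroup.mem_carrier[OF H] by auto
  have "inv h \<otimes> g = inv h \<otimes> (g \<otimes> h) \<otimes> inv h"
    using h g by (simp add: m_assoc)
  also have "\<dots> = g \<otimes> inv h"
    using h g by (simp add: hg[symmetric] m_assoc[symmetric])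
  finally show "inv h \<in> {h \<in> H. h \<otimes> g = g \<otimes> h}"
    using h H by (simp add: subgroup.m_inv_closed)
next
  fix a b assume "a \<in> {h \<in> H. h \<otimes> g = g \<otimes> h}" "b \<in> {h \<in> H. h \<otimes> g = g \<otimes> h}"
  then have ab: "a \<in> H" "b \<in> H" "a \<in> carrier G" "b \<in> carrier G"
    and ag: "a \<otimes> g = g \<otimes> a" and bg: "b \<otimes> g = g \<otimes> b"
    using subgroup.mem_carrier[OF H] by auto
  have "a \<otimes> b \<otimes> g = a \<otimes> (g \<otimes> b)"
    using ab g by (simp add: m_assoc bg)
  also have "\<dots> = g \<otimes> (a \<otimes> b)"
    using ab g by (simp add: m_assoc[symmetric] ag)
  finally show "a \<otimes> b \<in> {h \<in> H. h \<otimes> g = g \<otimes> h}"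
    using ab H by (simp add: subgroup.m_closed)
qed (use H g subgroup.subset subgroup.one_closed in \<open>auto intro!: exI[of _ \<one>]\<close>)

section \<open>Coordinate changes and restriction to coordinate subspaces\<close>

lemma quasihomogeneous_act:
  assumes S: "finite S" and qh: "quasihomogeneous S w d W"
    and A: "supported S A" "block_diag S w A"
  shows "quasihomogeneous S w d (act S A W)"
proof -
  define D where "D t = diagm S (\<lambda>i. t ^ w i)" for t :: complex
  have scale: "subst (\<lambda>i. if i \<in> S then Const (t ^ w i) * Var i else Var i) = act S (D t)" for t
    using S by (simp add: D_def act_diagm)
  have commute: "mmul S A (D t) = mmul S (D t) A" for t
    using block_diag_iff_commute[OF S A(1)] block_diag_comp[OF A(2), of "\<lambda>k. t ^ k"]
    by (simp add: D_def)
  have "act S (D t) (act S A W) = Const (t ^ d) * act S A W" for t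
  proof -
    have "act S (D t) (act S A W) = act S A (act S (D t) W)"
      using S by (simp add: act_act commute)
    also have "act S (D t) W = Const (t ^ d) * W"
      using qh by (simp add: quasihomogeneous_def flip: scale)
    finally show ?thesis
      by (simp add: act_eq_subst)
  qed
  with qh show ?thesis
    by (simp add: quasihomogeneous_def poly_in_act scale)
qed

definition coord_proj :: "nat set \<Rightarrow> nat \<Rightarrow> mpoly" where
  "coord_proj T i = (if i \<in> T then Var i else 0)"

lemma poly_in_subst_coord_proj: "poly_in T (subst (coord_proj T) p)"
  by (rule poly_in_subst[OF poly_in_UNIV]) (simp add: coord_proj_def)

lemma subst_coord_proj_id: "poly_in T p \<Longrightarrow> subst (coord_proj T) p = p"
  using subst_cong[of T p "coord_proj T" Var] by (simp add: coord_proj_def)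

lemma quasihomogeneous_subst_coord_proj:
  assumes qh: "quasihomogeneous S w d W" and T: "T \<subseteq> S"
  shows "quasihomogeneous T w d (subst (coord_proj T) W)"
proof -
  have W: "poly_in S W"
    using qh by (simp add: quasihomogeneous_def)
  have "subst (\<lambda>i. if i \<in> T then Const (t ^ w i) * Var i else Var i) (subst (coord_proj T) W)
      = subst (coord_proj T) (subst (\<lambda>i. if i \<in> S then Const (t ^ w i) * Var i else Var i) W)" for t
    unfolding subst_subst using T by (intro subst_cong[OF W]) (auto simp: coord_proj_def)
  with qh T show ?thesis
    by (auto simp: quasihomogeneous_def poly_in_subst_coord_proj)
qed

lemma pderiv_subst_coord_proj:
  "k \<in> T \<Longrightarrow> pderiv_var k (subst (coord_proj T) p) = subst (coord_proj T) (pderiv_var k p)"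
  using poly_in_UNIV[of p] by (induction rule: mpoly_induct) (auto simp: coord_proj_def pderiv_var_Var)

lemma subst_coord_proj_act_diagm:
  assumes "finite S" "\<forall>i\<in>T. f i = 1"
  shows "subst (coord_proj T) (act S (diagm S f) p) = subst (coord_proj T) p"
  using assms unfolding act_diagm[OF assms(1)] subst_subst
  by (intro arg_cong[where f="\<lambda>\<sigma>. subst \<sigma> p"] ext) (simp add: coord_proj_def)

text \<open>If \<open>p\<close> is invariant under \<open>x\<^sub>i \<mapsto> f\<^sub>i x\<^sub>i\<close>, then \<open>\<partial>p/\<partial>x\<^sub>k\<close> is an eigenvector with
  eigenvalue \<open>1/f\<^sub>k\<close>; on the locus where only the variables with \<open>f\<^sub>i = 1\<close> survive this forces it to
  vanish when \<open>f\<^sub>k \<noteq> 1\<close>.\<close>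

lemma subst_coord_proj_pderiv_eq_0:
  assumes S: "finite S" "poly_in S p" "k \<in> S"
    and inv: "act S (diagm S f) p = p" and fk: "f k \<noteq> 1" and T: "\<forall>i\<in>T. f i = 1"
  shows "subst (coord_proj T) (pderiv_var k p) = 0"
proof -
  let ?\<pi> = "subst (coord_proj T)"
  have "?\<pi> (pderiv_var k p) = ?\<pi> (pderiv_var k (act S (diagm S f) p))"
    by (simp add: inv)
  also have "\<dots> = Const (f k) * ?\<pi> (pderiv_var k p)"
    using S T by (simp add: pderiv_act_diagm subst_coord_proj_act_diagm)
  finally have "Const (1 - f k) * ?\<pi> (pderiv_var k p) = 0"
    by (simp add: Const_diff left_diff_distrib)
  with fk show ?thesis
    by simp
qed

lemma jacobian_ideal_0: "0 \<in> jacobian_ideal T V"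
  unfolding jacobian_ideal_def by (auto intro!: exI[of _ "\<lambda>_. 0"])

lemma jacobian_ideal_add:
  assumes "p \<in> jacobian_ideal T V" "q \<in> jacobian_ideal T V"
  shows "p + q \<in> jacobian_ideal T V"
proof -
  obtain a b where "\<forall>i\<in>T. poly_in T (a i)" "p = (\<Sum>i\<in>T. a i * pderiv_var i V)"
    and "\<forall>i\<in>T. poly_in T (b i)" "q = (\<Sum>i\<in>T. b i * pderiv_var i V)"
    using assms unfolding jacobian_ideal_def by blast
  then show ?thesis
    unfolding jacobian_ideal_def
    by (auto intro!: exI[of _ "\<lambda>i. a i + b i"] simp: distrib_right sum.distrib)
qed

lemma jacobian_ideal_mult:
  assumes "poly_in T r" "p \<in> jacobian_ideal T V"
  shows "r * p \<in> jacobian_ideal T V"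
proof -
  obtain a where "\<forall>i\<in>T. poly_in T (a i)" "p = (\<Sum>i\<in>T. a i * pderiv_var i V)"
    using assms unfolding jacobian_ideal_def by blast
  with assms(1) show ?thesis
    unfolding jacobian_ideal_def
    by (auto intro!: exI[of _ "\<lambda>i. r * a i"] simp: sum_distrib_left mult.assoc)
qed

lemma jacobian_ideal_sum:
  "(\<And>x. x \<in> A \<Longrightarrow> f x \<in> jacobian_ideal T V) \<Longrightarrow> sum f A \<in> jacobian_ideal T V"
  by (induction A rule: infinite_finite_induct) (auto intro: jacobian_ideal_0 jacobian_ideal_add)

lemma sum_Const_mult_image:
  assumes "finite B"
  obtains c' where "(\<Sum>b\<in>B. Const (c b) * f b) = (\<Sum>y\<in>f ` B. Const (c' y) * y)"
proof
  have "(\<Sum>b\<in>B. Const (c b) * f b) = (\<Sum>y\<in>f ` B. \<Sum>b\<in>{b\<in>B. f b = y}. Const (c b) * f b)"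
    by (rule sum.image_gen[OF assms])
  also have "\<dots> = (\<Sum>y\<in>f ` B. Const (\<Sum>b\<in>{b\<in>B. f b = y}. c b) * y)"
    by (intro sum.cong refl) (auto simp: Const_sum sum_distrib_right)
  finally show "(\<Sum>b\<in>B. Const (c b) * f b) = \<dots>" .
qed

text \<open>The substitution is a surjective ring map \<open>\<complex>[x\<^sub>S] \<rightarrow> \<complex>[x\<^sub>T]\<close> carrying one Jacobian ideal into
  the other, so it maps a spanning set of one Jacobi ring onto a spanning set of the other.\<close>

lemma nondegenerate_subst:
  assumes nd: "nondegenerate S W"
    and into: "\<And>i. i \<in> S \<Longrightarrow> poly_in T (\<sigma> i)"
    and onto: "\<And>p. poly_in T p \<Longrightarrow> \<exists>q. poly_in S q \<and> subst \<sigma> q = p"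
    and jac: "\<And>i. i \<in> S \<Longrightarrow> subst \<sigma> (pderiv_var i W) \<in> jacobian_ideal T V"
  shows "nondegenerate T V"
proof -
  obtain B where B: "finite B" "B \<subseteq> {p. poly_in S p}"
    and span: "\<And>p. poly_in S p \<Longrightarrow> \<exists>c. p - (\<Sum>b\<in>B. Const (c b) * b) \<in> jacobian_ideal S W"
    using nd unfolding nondegenerate_def by blast
  have "\<exists>c'. p - (\<Sum>y\<in>subst \<sigma> ` B. Const (c' y) * y) \<in> jacobian_ideal T V" if p: "poly_in T p" for p
  proof -
    obtain q where q: "poly_in S q" "subst \<sigma> q = p"
      using onto[OF p] by blast
    obtain c a where a: "\<forall>i\<in>S. poly_in S (a i)"
      and qa: "q - (\<Sum>b\<in>B. Const (c b) * b) = (\<Sum>i\<in>S. a i * pderiv_var i W)"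
      using span[OF q(1)] unfolding jacobian_ideal_def by blast
    have "p - (\<Sum>b\<in>B. Const (c b) * subst \<sigma> b) = subst \<sigma> (q - (\<Sum>b\<in>B. Const (c b) * b))"
      using q(2) by (simp add: subst_sum)
    also have "\<dots> = (\<Sum>i\<in>S. subst \<sigma> (a i) * subst \<sigma> (pderiv_var i W))"
      by (simp add: qa subst_sum)
    also have "\<dots> \<in> jacobian_ideal T V"
      using a into jac by (intro jacobian_ideal_sum jacobian_ideal_mult poly_in_subst) auto
    finally have in_J: "p - (\<Sum>b\<in>B. Const (c b) * subst \<sigma> b) \<in> jacobian_ideal T V" .
    obtain c' where "(\<Sum>b\<in>B. Const (c b) * subst \<sigma> b) = (\<Sum>y\<in>subst \<sigma> ` B. Const (c' y) * y)"
      using sum_Const_mult_image[OF B(1)] .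
    with in_J show ?thesis
      by auto
  qed
  moreover have "subst \<sigma> ` B \<subseteq> {p. poly_in T p}"
    using B(2) into by (auto intro: poly_in_subst)
  ultimately show ?thesis
    using B(1) unfolding nondegenerate_def by blast
qed

definition restrict_mat :: "nat set \<Rightarrow> cmat \<Rightarrow> cmat" where
  "restrict_mat T M = (\<lambda>i j. if i \<in> T \<and> j \<in> T then M i j else 0)"

lemma supported_restrict_mat [simp]: "supported T (restrict_mat T M)"
  by (simp add: supported_def restrict_mat_def)

lemma restrict_mat_idm: "T \<subseteq> S \<Longrightarrow> restrict_mat T (idm S) = idm T"
  by (auto simp: restrict_mat_def idm_def fun_eq_iff)

lemma block_diag_restrict_mat: "block_diag S f M \<Longrightarrow> T \<subseteq> S \<Longrightarrow> block_diag T f (restrict_mat T M)"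
  by (auto simp: block_diag_def restrict_mat_def)

lemma restrict_mat_mmul:
  assumes "finite S" "T \<subseteq> S" and M: "\<And>i j. i \<in> T \<Longrightarrow> j \<in> S - T \<Longrightarrow> M i j = 0"
  shows "mmul T (restrict_mat T M) (restrict_mat T M') = restrict_mat T (mmul S M M')"
proof (intro ext)
  fix i k
  show "mmul T (restrict_mat T M) (restrict_mat T M') i k = restrict_mat T (mmul S M M') i k"
  proof (cases "i \<in> T \<and> k \<in> T")
    case True
    then have "(\<Sum>j\<in>T. M i j * M' j k) = (\<Sum>j\<in>S. M i j * M' j k)"
      using assms(2) M by (intro sum.mono_neutral_left[OF assms(1)]) auto
    then show ?thesis
      using True assms(2) by (auto simp: mmul_def restrict_mat_def intro: sum.cong)
  qed (auto simp: mmul_def restrict_mat_def)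
qed

lemma act_restrict_mat_subst_coord_proj:
  assumes S: "finite S" "T \<subseteq> S" "poly_in S p"
    and M: "\<And>i j. i \<in> S \<Longrightarrow> j \<in> S \<Longrightarrow> (i \<in> T \<longleftrightarrow> j \<notin> T) \<Longrightarrow> M i j = 0"
  shows "act T (restrict_mat T M) (subst (coord_proj T) p) = subst (coord_proj T) (act S M p)"
  unfolding act_eq_subst subst_subst
proof (rule subst_cong[OF S(3)])
  fix i assume i: "i \<in> S"
  have image: "subst (coord_proj T) (act_var S M i) = (\<Sum>j\<in>S. Const (M i j) * coord_proj T j)"
    using i by (simp add: act_var_def subst_sum)
  show "subst (act_var T (restrict_mat T M)) (coord_proj T i) = subst (coord_proj T) (act_var S M i)"
  proof (cases "i \<in> T")
    case True
    have "(\<Sum>j\<in>S. Const (M i j) * coord_proj T j) = (\<Sum>j\<in>T. Const (M i j) * Var j)"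
      using S(1,2) by (intro sum.mono_neutral_cong_right) (auto simp: coord_proj_def)
    with True image show ?thesis
      by (simp add: coord_proj_def act_var_def restrict_mat_def)
  next
    case False
    have "(\<Sum>j\<in>S. Const (M i j) * coord_proj T j) = 0"
      using i False M by (intro sum.neutral) (auto simp: coord_proj_def)
    with False image show ?thesis
      by (simp add: coord_proj_def)
  qed
qed

section \<open>The fixed locus of \<open>g\<close>\<close>

locale eigenbasis =
  fixes n :: nat and w :: "nat \<Rightarrow> nat" and d :: nat and W :: mpoly
    and G :: "cmat set" and g P Q :: cmat and lam :: "nat \<Rightarrow> complex"
  assumes qh: "quasihomogeneous {..<n} w d W"
    and nd: "nondegenerate {..<n} W"
    and Gfin: "finite G"
    and Gsub: "subgroup G (sym_group {..<n} w W)"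
    and gG: "g \<in> G"
    and P: "P \<in> GLset {..<n}" and Q: "Q \<in> GLset {..<n}"
    and PQ: "mmul {..<n} P Q = idm {..<n}" and QP: "mmul {..<n} Q P = idm {..<n}"
    and Pw: "\<forall>i<n. \<forall>j<n. w i \<noteq> w j \<longrightarrow> P i j = 0"
    and eig: "\<forall>i<n. \<forall>k<n. mmul {..<n} P g i k = lam i * P i k"
begin

abbreviation "N \<equiv> {..<n}"
abbreviation "SG \<equiv> sym_group N w W"

definition "I = {i. i < n \<and> lam i = 1}"
definition "W' = act N Q W"
definition "Wg = subst (coord_proj I) W'"
definition "in_eigenbasis h = mmul N (mmul N P h) Q"
definition "res h = restrict_mat I (in_eigenbasis h)"
definition "C = {h \<in> G. mmul N h g = mmul N g h}"

lemma I_subset: "I \<subseteq> N"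
  by (auto simp: I_def)

lemma finite_I: "finite I"
  using I_subset finite_subset by blast

lemma supported_P: "supported N P" and supported_Q: "supported N Q"
  using P Q by (simp_all add: GLset_iff)

lemma G_sym_set: "h \<in> G \<Longrightarrow> h \<in> sym_set N w W"
  using subgroup.subset[OF Gsub] by (auto simp: sym_group_def)

lemma poly_in_W': "poly_in N W'"
  using qh by (simp add: W'_def quasihomogeneous_def poly_in_act)

lemma block_diag_P: "block_diag N w P"
  using Pw by (simp add: block_diag_def)

lemma block_diag_Q: "block_diag N w Q"
  using block_diag_inverse_nat[OF _ supported_P supported_Q PQ QP block_diag_P] by simp

lemma in_eigenbasis_mmul: "mmul N (in_eigenbasis h) (in_eigenbasis k) = in_eigenbasis (mmul N h k)"
proof -
  have "mmul N (in_eigenbasis h) (in_eigenbasis k) = mmul N (mmul N P h) (mmul N (mmul N Q P) (mmul N k Q))"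
    by (simp add: in_eigenbasis_def mmul_assoc)
  also have "\<dots> = in_eigenbasis (mmul N h k)"
    by (simp add: QP mmul_idm_left in_eigenbasis_def mmul_assoc)
  finally show ?thesis .
qed

lemma in_eigenbasis_g: "in_eigenbasis g = diagm N lam"
proof -
  have "mmul N P g = mmul N (diagm N lam) P"
  proof (intro ext)
    fix i k
    show "mmul N P g i k = mmul N (diagm N lam) P i k"
      using eig by (cases "i < n \<and> k < n") (auto simp: mmul_diagm_left, auto simp: mmul_def)
  qed
  then have "in_eigenbasis g = mmul N (diagm N lam) (mmul N P Q)"
    by (simp add: in_eigenbasis_def mmul_assoc)
  then show ?thesis
    by (simp add: PQ mmul_idm_right)
qed

lemma block_diag_lam_in_eigenbasis: "h \<in> C \<Longrightarrow> block_diag N lam (in_eigenbasis h)"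
proof -
  assume "h \<in> C"
  then have "mmul N (in_eigenbasis h) (in_eigenbasis g) = mmul N (in_eigenbasis g) (in_eigenbasis h)"
    by (simp add: C_def in_eigenbasis_mmul)
  then show ?thesis
    by (simp add: block_diag_iff_commute in_eigenbasis_def in_eigenbasis_g[symmetric])
qed

lemma block_diag_w_in_eigenbasis: "h \<in> G \<Longrightarrow> block_diag N w (in_eigenbasis h)"
  unfolding in_eigenbasis_def
  using G_sym_set block_diag_P block_diag_Q by (auto simp: sym_set_iff intro!: block_diag_mmul)

lemma act_in_eigenbasis_W': "h \<in> G \<Longrightarrow> act N (in_eigenbasis h) W' = W'"
proof -
  assume h: "h \<in> G"
  have "mmul N Q (in_eigenbasis h) = mmul N (mmul N Q P) (mmul N h Q)"
    by (simp add: in_eigenbasis_def mmul_assoc)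
  also have "\<dots> = mmul N h Q"
    by (simp add: QP mmul_idm_left)
  finally have "act N (in_eigenbasis h) W' = act N Q (act N h W)"
    by (simp add: W'_def act_act)
  then show ?thesis
    using G_sym_set[OF h] by (simp add: W'_def sym_set_iff)
qed

lemma quasihomogeneous_Wg: "quasihomogeneous I w d Wg"
  unfolding Wg_def W'_def
  using quasihomogeneous_act[OF _ qh supported_Q block_diag_Q] I_subset
  by (simp add: quasihomogeneous_subst_coord_proj)

lemma subst_coord_proj_pderiv_W':
  assumes "k \<in> N"
  shows "subst (coord_proj I) (pderiv_var k W') = (if k \<in> I then pderiv_var k Wg else 0)"
proof (cases "k \<in> I")
  case True
  then show ?thesis
    by (simp add: Wg_def pderiv_subst_coord_proj)
next
  case False
  have "act N (diagm N lam) W' = W'"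
    using act_in_eigenbasis_W'[OF gG] by (simp add: in_eigenbasis_g)
  with False assms show ?thesis
    by (simp add: subst_coord_proj_pderiv_eq_0[OF _ poly_in_W'] I_def)
qed

lemma subst_coord_proj_act_pderiv_W:
  assumes "i \<in> N"
  shows "subst (coord_proj I) (act N Q (pderiv_var i W)) = (\<Sum>k\<in>I. Const (P k i) * pderiv_var k Wg)"
proof -
  have "subst (coord_proj I) (act N Q (pderiv_var i W))
      = (\<Sum>k\<in>N. Const (P k i) * subst (coord_proj I) (pderiv_var k W'))"
    using assms qh
    by (simp add: act_pderiv[OF _ _ _ QP] quasihomogeneous_def subst_sum W'_def)
  also have "\<dots> = (\<Sum>k\<in>I. Const (P k i) * pderiv_var k Wg)"
    using I_subset by (intro sum.mono_neutral_cong_right) (auto simp: subst_coord_proj_pderiv_W')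
  finally show ?thesis .
qed

lemma nondegenerate_Wg: "nondegenerate I Wg"
proof -
  define \<sigma> where "\<sigma> i = subst (coord_proj I) (act_var N Q i)" for i
  have subst_\<sigma>: "subst \<sigma> f = subst (coord_proj I) (act N Q f)" for f
    by (simp add: \<sigma>_def[abs_def] act_eq_subst subst_subst)
  have onto: "poly_in N (act N P p) \<and> subst \<sigma> (act N P p) = p" if "poly_in I p" for p
    using that I_subset by (simp add: subst_\<sigma> act_act PQ subst_coord_proj_id poly_in_act poly_in_subset)
  have jac: "subst \<sigma> (pderiv_var i W) \<in> jacobian_ideal I Wg" if "i \<in> N" for i
    unfolding subst_\<sigma> subst_coord_proj_act_pderiv_W[OF that] jacobian_ideal_def
    by (auto intro!: exI[of _ "\<lambda>k. Const (P k i)"])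
  show ?thesis
    using onto jac by (intro nondegenerate_subst[OF nd]) (auto simp: \<sigma>_def poly_in_subst_coord_proj)
qed

lemma group_SG: "group SG"
  by (simp add: group_sym_group)

lemma subgroup_C: "subgroup C SG"
  unfolding C_def
  using group.subgroup_centralizer[OF group_SG Gsub] gG subgroup.subset[OF Gsub]
  by (auto simp: sym_group_def)

lemma in_eigenbasis_splits:
  assumes "h \<in> C" "i \<in> N" "j \<in> N" "i \<in> I \<longleftrightarrow> j \<notin> I"
  shows "in_eigenbasis h i j = 0"
proof -
  have "lam i \<noteq> lam j"
    using assms(2-4) by (auto simp: I_def)
  then show ?thesis
    using block_diag_lam_in_eigenbasis[OF assms(1)] assms(2,3) by (simp add: block_diag_def)
qed

lemma res_mmul: "h \<in> C \<Longrightarrow> mmul I (res h) (res k) = res (mmul N h k)"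
  unfolding res_def
  using I_subset in_eigenbasis_splits[of h]
  by (subst restrict_mat_mmul[of N]) (auto simp: in_eigenbasis_mmul)

lemma supported_res: "supported I (res h)"
  by (simp add: res_def)

lemma res_idm: "res (idm N) = idm I"
proof -
  have "in_eigenbasis (idm N) = idm N"
    using supported_P by (simp add: in_eigenbasis_def mmul_idm_right PQ)
  then show ?thesis
    using I_subset by (simp add: res_def restrict_mat_idm)
qed

lemma act_res_Wg: "h \<in> C \<Longrightarrow> act I (res h) Wg = Wg"
  unfolding res_def Wg_def
  using I_subset poly_in_W' in_eigenbasis_splits[of h]
  by (subst act_restrict_mat_subst_coord_proj[of N]) (auto simp: C_def act_in_eigenbasis_W')

lemma res_hom: "res \<in> hom (SG\<lparr>carrier := C\<rparr>) (sym_group I w Wg)"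
proof (rule homI)
  fix h assume "h \<in> carrier (SG\<lparr>carrier := C\<rparr>)"
  then have h: "h \<in> C" and h': "inv\<^bsub>SG\<^esub> h \<in> C"
    using subgroup.m_inv_closed[OF subgroup_C] by auto
  have "h \<in> carrier SG"
    using h subgroup.subset[OF subgroup_C] by blast
  then have "mmul N h (inv\<^bsub>SG\<^esub> h) = idm N" "mmul N (inv\<^bsub>SG\<^esub> h) h = idm N"
    using group.r_inv[OF group_SG] group.l_inv[OF group_SG] by (simp_all add: sym_group_def)
  then have "mmul I (res h) (res (inv\<^bsub>SG\<^esub> h)) = idm I" "mmul I (res (inv\<^bsub>SG\<^esub> h)) (res h) = idm I"
    using h h' by (simp_all add: res_mmul res_idm)
  moreover have "block_diag I w (res h)"
    using h I_subset block_diag_w_in_eigenbasis[of h] by (simp add: res_def C_def block_diag_restrict_mat)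
  ultimately show "res h \<in> carrier (sym_group I w Wg)"
    using act_res_Wg[OF h]
    by (auto simp: sym_group_def sym_set_iff GLset_iff supported_res intro!: exI[of _ "res (inv\<^bsub>SG\<^esub> h)"])
qed (simp add: sym_group_def res_mmul)

lemma finite_res_image: "finite (res ` C)"
  using Gfin by (simp add: C_def)

lemma subgroup_res_image: "subgroup (res ` C) (sym_group I w Wg)"
proof -
  interpret res: group_hom "SG\<lparr>carrier := C\<rparr>" "sym_group I w Wg" res
    by (simp add: group_hom_def group_hom_axioms_def res_hom group_sym_group[OF finite_I]
        subgroup.subgroup_is_group[OF subgroup_C group_SG])
  show ?thesis
    using res.img_is_subgroup by simp
qed

end

theorem lemma4p1:
  fixes n :: nat and w :: "nat \<Rightarrow> nat" and d :: nat and W :: mpoly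
    and G :: "cmat set" and g P Q :: cmat and lam :: "nat \<Rightarrow> complex"
  assumes qh: "quasihomogeneous {..<n} w d W"
    and nd: "nondegenerate {..<n} W"
    and Gfin: "finite G"
    and Gsub: "subgroup G (sym_group {..<n} w W)"
    and gG: "g \<in> G"
    \<comment> \<open>eigenbasis y_i = \<Sum>_j P_ij x_j of g with eigenvalues lam i, y_i of the same weight as x_i\<close>
    and P: "P \<in> GLset {..<n}" and Q: "Q \<in> GLset {..<n}"
    and PQ: "mmul {..<n} P Q = idm {..<n}" and QP: "mmul {..<n} Q P = idm {..<n}"
    and Pw: "\<forall>i<n. \<forall>j<n. w i \<noteq> w j \<longrightarrow> P i j = 0"
    and eig: "\<forall>i<n. \<forall>k<n. mmul {..<n} P g i k = lam i * P i k"
    \<comment> \<open>n_g > 0; the argument does not need it\<close>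
    and ng: "{i. i < n \<and> lam i = 1} \<noteq> {}"
  shows "let I = {i. i < n \<and> lam i = 1};
             W' = act {..<n} Q W;
             Wg = subst (\<lambda>i. if i \<in> I then Var i else 0) W';
             res = (\<lambda>h. \<lambda>i j. if i \<in> I \<and> j \<in> I
                      then mmul {..<n} (mmul {..<n} P h) Q i j else 0);
             C = {h \<in> G. mmul {..<n} h g = mmul {..<n} g h}
         in quasihomogeneous I w d Wg \<and> nondegenerate I Wg \<and>
            finite (res ` C) \<and> subgroup (res ` C) (sym_group I w Wg)"
proof -
  interpret eigenbasis n w d W G g P Q lam
    using qh nd Gfin Gsub gG P Q PQ QP Pw eig by (simp add: eigenbasis_def)
  show ?thesis
    using quasihomogeneous_Wg nondegenerate_Wg finite_res_image subgroup_res_image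
    unfolding Let_def I_def Wg_def W'_def C_def coord_proj_def[abs_def] res_def[abs_def]
      restrict_mat_def in_eigenbasis_def
    by (intro conjI)
qed

end
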